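(* Let $T=(V(T),E(T))$ be a rooted directed tree with $k\geq1$ vertices and root $r$. For a bijection $\phi\colon V(T)\to\{X_1,\dots,X_k\}$ set \[\langle T,\phi\rangle=\frac{\prod_{v\in V(T)\setminus\{r\}}\phi(v)}{\prod_{(v_1\to v_2)\in E(T)}\bigl(\phi(v_1)-\phi(v_2)\bigr)}\in\mathbb{Q}(X_1,\dots,X_k),\qquad \langle T\rangle=\sum_{\phi}\langle T,\phi\rangle,\] the sum running over all bijections $\phi\colon V(T)\to\{X_1,\dots,X_k\}$. Then $\langle T\rangle$ is a nonzero integer.
   Context: A rooted directed tree is a tree (connected acyclic graph) in which each edge carries an orientation (arbitrary, not necessarily towards or away from the root) and one vertex is distinguished as the root. $X_1,\dots,X_k$ are independent commuting variables. *)

theory Defs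
  imports Complex_Main "HOL-Library.FuncSet"
begin

text \<open>The underlying undirected graph is a tree:
  no loops, connected, and exactly |V| - 1 edges (this also excludes antiparallel
  pairs, since then fewer than |V|-1 undirected edges would remain).\<close>
definition rooted_directed_tree :: "'a set \<Rightarrow> ('a \<times> 'a) set \<Rightarrow> 'a \<Rightarrow> bool" where
  "rooted_directed_tree V E r \<longleftrightarrow>
     finite V \<and> r \<in> V \<and> E \<subseteq> V \<times> V \<and> (\<forall>(a,b)\<in>E. a \<noteq> b) \<and>
     card E = card V - 1 \<and>
     (\<forall>u\<in>V. \<forall>w\<in>V. (u, w) \<in> (E \<union> E\<inverse>)\<^sup>*)"

text \<open>Bijections phi : V \<rightarrow> {X_1..X_k}, encoded by the index bijection V \<rightarrow> {1..k}.\<close>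
definition labelings :: "'a set \<Rightarrow> ('a \<Rightarrow> nat) set" where
  "labelings V = {\<sigma> \<in> V \<rightarrow>\<^sub>E {1..card V}. bij_betw \<sigma> V {1..card V}}"

text \<open>The rational function <T> evaluated at the point X_i := x i.\<close>
definition tree_bracket_at :: "'a set \<Rightarrow> ('a \<times> 'a) set \<Rightarrow> 'a \<Rightarrow> (nat \<Rightarrow> rat) \<Rightarrow> rat" where
  "tree_bracket_at V E r x =
     (\<Sum>\<sigma>\<in>labelings V.
        (\<Prod>v\<in>V - {r}. x (\<sigma> v)) / (\<Prod>(a,b)\<in>E. x (\<sigma> a) - x (\<sigma> b)))"

end

theory Submission
  imports Defs
begin

(* Orienting every edge of T towards the root changes each summand of <T> by the same sign.
   The non-root vertices then form a rooted forest, and for a rooted forest on V whose roots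
   are attached to an extra vertex labelled c, the sum over all bijections phi : V -> B of
   prod phi(v) / (prod over edges (phi(child) - phi(parent)) * prod over roots (phi(root) - c))
   equals C * prod_{b in B} b / (b - c) for a positive integer C. This follows by induction on
   the forest: a disjoint union multiplies the constants (and a binomial coefficient counts the
   ways to split B), while adding a new root reduces, after summing over its label, to the
   partial fraction identity sum_b b/(b - c) prod_{b' ~= b} b'/(b' - b) = prod_b b/(b - c).
   For the tree itself, summing over the label of r leaves sum_b prod_{b' ~= b} b'/(b' - b),
   which is 1; so <T> = +-C. *)

section \<open>Bijections onto a finite set\<close>

definition bijections :: "'a set \<Rightarrow> 'b set \<Rightarrow> ('a \<Rightarrow> 'b) set" where
  "bijections V B = {\<phi> \<in> V \<rightarrow>\<^sub>E B. bij_betw \<phi> V B}"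

lemma finite_bijections: "finite V \<Longrightarrow> finite B \<Longrightarrow> finite (bijections V B)"
  unfolding bijections_def by (rule finite_subset[OF _ finite_PiE[of V "\<lambda>_. B"]]) auto

lemma restrict_in_bijections: "bij_betw \<phi> V B \<Longrightarrow> restrict \<phi> V \<in> bijections V B"
  by (auto simp: bijections_def bij_betw_def inj_on_def)

lemma bijectionsI: "bij_betw \<phi> V B \<Longrightarrow> \<phi> \<in> extensional V \<Longrightarrow> \<phi> \<in> bijections V B"
  by (auto simp: bijections_def bij_betw_def PiE_def)

lemma bij_betw_bijections_insert:
  assumes "x \<notin> V"
  shows "bij_betw (\<lambda>\<phi>. (\<phi> x, restrict \<phi> V)) (bijections (insert x V) B)
           (SIGMA b:B. bijections V (B - {b}))"
proof (rule bij_betw_byWitness[where f'="\<lambda>(b,\<psi>). \<psi>(x:=b)"])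
  show "\<forall>\<phi>\<in>bijections (insert x V) B. (case (\<phi> x, restrict \<phi> V) of (b, \<psi>) \<Rightarrow> \<psi>(x := b)) = \<phi>"
    using assms by (auto simp: bijections_def fun_eq_iff PiE_def extensional_def)
  show "\<forall>a\<in>(SIGMA b:B. bijections V (B - {b})).
          (\<lambda>\<phi>. (\<phi> x, restrict \<phi> V)) (case a of (b, \<psi>) \<Rightarrow> \<psi>(x := b)) = a"
    using assms by (auto simp: bijections_def fun_eq_iff PiE_def extensional_def)
  show "(\<lambda>\<phi>. (\<phi> x, restrict \<phi> V)) ` bijections (insert x V) B \<subseteq> (SIGMA b:B. bijections V (B - {b}))"
  proof safe
    fix \<phi> assume \<phi>: "\<phi> \<in> bijections (insert x V) B"
    then show "\<phi> x \<in> B" by (auto simp: bijections_def)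
    have "bij_betw \<phi> V (B - {\<phi> x})" using \<phi> assms unfolding bijections_def
      by (auto simp: bij_betw_def inj_on_def image_iff)
    then show "restrict \<phi> V \<in> bijections V (B - {\<phi> x})" by (rule restrict_in_bijections)
  qed
  show "(\<lambda>(b, \<psi>). \<psi>(x := b)) ` (SIGMA b:B. bijections V (B - {b})) \<subseteq> bijections (insert x V) B"
  proof safe
    fix b \<psi> assume b: "b \<in> B" and \<psi>: "\<psi> \<in> bijections V (B - {b})"
    have "bij_betw \<psi> V (B - {b})" using \<psi> by (simp add: bijections_def)
    then have "bij_betw (\<psi>(x:=b)) (insert x V) (insert b (B - {b}))"
      using assms by (auto simp: bij_betw_def inj_on_fun_updI)
    then show "\<psi>(x := b) \<in> bijections (insert x V) B"
      using b \<psi> assms by (auto simp: bijections_def PiE_def extensional_def insert_absorb)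
  qed
qed

lemma sum_bijections_insert:
  assumes "x \<notin> V" "finite V" "finite B"
  shows "(\<Sum>\<phi>\<in>bijections (insert x V) B. f \<phi>) = (\<Sum>b\<in>B. \<Sum>\<psi>\<in>bijections V (B - {b}). f (\<psi>(x:=b)))"
proof -
  have "(\<Sum>b\<in>B. \<Sum>\<psi>\<in>bijections V (B - {b}). f (\<psi>(x:=b)))
      = (\<Sum>(b,\<psi>)\<in>(SIGMA b:B. bijections V (B - {b})). f (\<psi>(x:=b)))"
    using assms by (intro sum.Sigma) (auto intro: finite_bijections)
  also have "\<dots> = (\<Sum>\<phi>\<in>bijections (insert x V) B. f ((restrict \<phi> V)(x := \<phi> x)))"
    by (simp add: sum.reindex_bij_betw[OF bij_betw_bijections_insert[OF assms(1)], symmetric])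
  also have "\<dots> = (\<Sum>\<phi>\<in>bijections (insert x V) B. f \<phi>)"
  proof (rule sum.cong)
    fix \<phi> assume "\<phi> \<in> bijections (insert x V) B"
    then have "(restrict \<phi> V)(x := \<phi> x) = \<phi>"
      by (auto simp: bijections_def fun_eq_iff PiE_def extensional_def)
    then show "f ((restrict \<phi> V)(x := \<phi> x)) = f \<phi>" by simp
  qed simp
  finally show ?thesis ..
qed

lemma bij_betw_bijections_Un:
  assumes "V1 \<inter> V2 = {}"
  shows "bij_betw (\<lambda>\<phi>. (\<phi> ` V1, restrict \<phi> V1, restrict \<phi> V2)) (bijections (V1 \<union> V2) B)
          (SIGMA B1:{B1. B1 \<subseteq> B \<and> card B1 = card V1}. bijections V1 B1 \<times> bijections V2 (B - B1))"
proof (rule bij_betw_byWitness[where f'="\<lambda>(B1,\<phi>1,\<phi>2) v. if v \<in> V1 then \<phi>1 v else \<phi>2 v"],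
    goal_cases)
  case 1
  show ?case by (auto simp: bijections_def fun_eq_iff PiE_def extensional_def)
next
  case 2
  show ?case
  proof clarsimp
    fix B1 \<phi>1 \<phi>2 assume \<phi>1: "\<phi>1 \<in> bijections V1 B1" and \<phi>2: "\<phi>2 \<in> bijections V2 (B - B1)"
    then have "\<phi>1 ` V1 = B1" by (auto simp: bijections_def bij_betw_def)
    moreover have "restrict (\<lambda>v. if v \<in> V1 then \<phi>1 v else \<phi>2 v) V1 = \<phi>1"
      using \<phi>1 by (auto simp: bijections_def fun_eq_iff PiE_def extensional_def)
    moreover have "restrict (\<lambda>v. if v \<in> V1 then \<phi>1 v else \<phi>2 v) V2 = \<phi>2"
      using \<phi>2 assms by (auto simp: bijections_def fun_eq_iff PiE_def extensional_def)
    ultimately show "\<phi>1 ` V1 = B1 \<and>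
        restrict (\<lambda>v. if v \<in> V1 then \<phi>1 v else \<phi>2 v) V1 = \<phi>1 \<and>
        restrict (\<lambda>v. if v \<in> V1 then \<phi>1 v else \<phi>2 v) V2 = \<phi>2" by simp
  qed
next
  case 3
  show ?case
  proof clarsimp
    fix \<phi> assume "\<phi> \<in> bijections (V1 \<union> V2) B"
    then have \<phi>: "bij_betw \<phi> (V1 \<union> V2) B" by (auto simp: bijections_def)
    have V1: "bij_betw \<phi> V1 (\<phi> ` V1)" using \<phi> by (auto simp: bij_betw_def inj_on_def)
    have "bij_betw \<phi> V2 (B - \<phi> ` V1)"
      using \<phi> assms by (auto simp: bij_betw_def inj_on_def image_iff)
    then show "\<phi> ` V1 \<subseteq> B \<and> card (\<phi> ` V1) = card V1 \<and>
        restrict \<phi> V1 \<in> bijections V1 (\<phi> ` V1) \<and> restrict \<phi> V2 \<in> bijections V2 (B - \<phi> ` V1)"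
      using \<phi> V1 bij_betw_same_card[OF V1] by (auto simp: bij_betw_def restrict_in_bijections)
  qed
next
  case 4
  show ?case
  proof clarify
    fix B1 \<phi>1 \<phi>2 assume B1: "B1 \<subseteq> B" and \<phi>1: "\<phi>1 \<in> bijections V1 B1"
      and \<phi>2: "\<phi>2 \<in> bijections V2 (B - B1)"
    let ?\<phi> = "\<lambda>v. if v \<in> V1 then \<phi>1 v else \<phi>2 v"
    have "bij_betw ?\<phi> V1 B1" using \<phi>1 by (auto simp: bijections_def bij_betw_def inj_on_def)
    moreover have "bij_betw ?\<phi> V2 (B - B1)"
      using \<phi>2 assms by (subst bij_betw_cong[where g=\<phi>2]) (auto simp: bijections_def)
    ultimately have "bij_betw ?\<phi> (V1 \<union> V2) (B1 \<union> (B - B1))" by (rule bij_betw_combine) auto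
    moreover have "?\<phi> \<in> extensional (V1 \<union> V2)"
      using \<phi>1 \<phi>2 by (auto simp: bijections_def PiE_def extensional_def)
    ultimately show "?\<phi> \<in> bijections (V1 \<union> V2) B"
      using B1 by (simp add: bijectionsI Un_absorb1)
  qed
qed

lemma sum_bijections_Un:
  assumes "V1 \<inter> V2 = {}" "finite V1" "finite V2" "finite B"
  shows "(\<Sum>\<phi>\<in>bijections (V1 \<union> V2) B. f (restrict \<phi> V1) (restrict \<phi> V2)) =
     (\<Sum>B1 | B1 \<subseteq> B \<and> card B1 = card V1.
        \<Sum>\<phi>1\<in>bijections V1 B1. \<Sum>\<phi>2\<in>bijections V2 (B - B1). f \<phi>1 \<phi>2)"
proof -
  have "(\<Sum>B1 | B1 \<subseteq> B \<and> card B1 = card V1.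
          \<Sum>\<phi>1\<in>bijections V1 B1. \<Sum>\<phi>2\<in>bijections V2 (B - B1). f \<phi>1 \<phi>2)
      = (\<Sum>B1 | B1 \<subseteq> B \<and> card B1 = card V1.
          \<Sum>(\<phi>1,\<phi>2)\<in>bijections V1 B1 \<times> bijections V2 (B - B1). f \<phi>1 \<phi>2)"
    by (simp add: sum.cartesian_product)
  also have "\<dots> = (\<Sum>(B1,\<phi>1,\<phi>2)\<in>(SIGMA B1:{B1. B1 \<subseteq> B \<and> card B1 = card V1}.
           bijections V1 B1 \<times> bijections V2 (B - B1)). f \<phi>1 \<phi>2)"
    using assms by (subst sum.Sigma)
      (auto simp: split_def intro!: finite_bijections dest: finite_subset)
  also have "\<dots> = (\<Sum>\<phi>\<in>bijections (V1 \<union> V2) B. f (restrict \<phi> V1) (restrict \<phi> V2))"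
    by (simp add: sum.reindex_bij_betw[OF bij_betw_bijections_Un[OF assms(1)], symmetric])
  finally show ?thesis ..
qed

lemma bij_betw_bijections_image:
  assumes "inj_on x A"
  shows "bij_betw (\<lambda>\<sigma>. restrict (x \<circ> \<sigma>) V) (bijections V A) (bijections V (x ` A))"
proof (rule bij_betw_byWitness[where f'="\<lambda>\<phi>. restrict (the_inv_into A x \<circ> \<phi>) V"])
  show "\<forall>\<sigma>\<in>bijections V A. restrict (the_inv_into A x \<circ> restrict (x \<circ> \<sigma>) V) V = \<sigma>"
  proof
    fix \<sigma> assume "\<sigma> \<in> bijections V A"
    then have "\<sigma> \<in> V \<rightarrow>\<^sub>E A" by (simp add: bijections_def)
    then show "restrict (the_inv_into A x \<circ> restrict (x \<circ> \<sigma>) V) V = \<sigma>"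
      by (intro PiE_ext) (auto simp: the_inv_into_f_f[OF assms] PiE_iff)
  qed
  show "\<forall>\<phi>\<in>bijections V (x ` A). restrict (x \<circ> restrict (the_inv_into A x \<circ> \<phi>) V) V = \<phi>"
  proof
    fix \<phi> assume "\<phi> \<in> bijections V (x ` A)"
    then have "\<phi> \<in> V \<rightarrow>\<^sub>E x ` A" by (simp add: bijections_def)
    then show "restrict (x \<circ> restrict (the_inv_into A x \<circ> \<phi>) V) V = \<phi>"
      by (intro PiE_ext) (auto simp: f_the_inv_into_f[OF assms] PiE_iff)
  qed
  have x: "bij_betw x A (x ` A)" and x_inv: "bij_betw (the_inv_into A x) (x ` A) A"
    using assms by (auto simp: inj_on_imp_bij_betw bij_betw_the_inv_into)
  show "(\<lambda>\<sigma>. restrict (x \<circ> \<sigma>) V) ` bijections V A \<subseteq> bijections V (x ` A)"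
  proof (rule image_subsetI)
    fix \<sigma> assume "\<sigma> \<in> bijections V A"
    then have "bij_betw (x \<circ> \<sigma>) V (x ` A)" using x by (auto simp: bijections_def intro: bij_betw_trans)
    then show "restrict (x \<circ> \<sigma>) V \<in> bijections V (x ` A)" by (rule restrict_in_bijections)
  qed
  show "(\<lambda>\<phi>. restrict (the_inv_into A x \<circ> \<phi>) V) ` bijections V (x ` A) \<subseteq> bijections V A"
  proof (rule image_subsetI)
    fix \<phi> assume "\<phi> \<in> bijections V (x ` A)"
    then have "bij_betw (the_inv_into A x \<circ> \<phi>) V A"
      using x_inv by (auto simp: bijections_def intro: bij_betw_trans)
    then show "restrict (the_inv_into A x \<circ> \<phi>) V \<in> bijections V A" by (rule restrict_in_bijections)
  qed
qed

section \<open>Two partial fraction identities\<close>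

lemma partial_fraction_prod:
  fixes B :: "'a::field set"
  assumes "finite B" "B \<noteq> {}" "z \<notin> B"
  shows "(\<Sum>b\<in>B. b / (b - z) * (\<Prod>b'\<in>B - {b}. b' / (b' - b))) = (\<Prod>b\<in>B. b / (b - z))"
  using assms
proof (induction B arbitrary: z rule: finite_ne_induct)
  case (singleton b)
  then show ?case by simp
next
  case (insert e F)
  define Q where "Q b = (\<Prod>b'\<in>F - {b}. b' / (b' - b))" for b
  have three_points: "b / (b - z) * (e / (e - b) * q) = e / (e - z) * (b / (b - z) * q - b / (b - e) * q)"
    if "b \<in> F" for b q
  proof -
    have "b - z \<noteq> 0" "e - b \<noteq> 0" "b - e \<noteq> 0" "e - z \<noteq> 0"
      using that insert.hyps insert.prems by auto
    then show ?thesis by (simp add: divide_simps) (simp add: algebra_simps)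
  qed
  have "(\<Sum>b\<in>F. b / (b - z) * (\<Prod>b'\<in>insert e F - {b}. b' / (b' - b)))
      = (\<Sum>b\<in>F. e / (e - z) * (b / (b - z) * Q b - b / (b - e) * Q b))"
  proof (rule sum.cong)
    fix b assume b: "b \<in> F"
    then have "insert e F - {b} = insert e (F - {b})" using insert.hyps by auto
    then have "(\<Prod>b'\<in>insert e F - {b}. b' / (b' - b)) = e / (e - b) * Q b"
      using insert.hyps by (simp add: Q_def)
    then show "b / (b - z) * (\<Prod>b'\<in>insert e F - {b}. b' / (b' - b))
        = e / (e - z) * (b / (b - z) * Q b - b / (b - e) * Q b)"
      by (simp only: three_points[OF b])
  qed simp
  also have "\<dots> = e / (e - z) * ((\<Sum>b\<in>F. b / (b - z) * Q b) - (\<Sum>b\<in>F. b / (b - e) * Q b))"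
    by (simp only: right_diff_distrib sum_subtractf sum_distrib_left)
  also have "(\<Sum>b\<in>F. b / (b - z) * Q b) = (\<Prod>b\<in>F. b / (b - z))"
    unfolding Q_def using insert.prems by (intro insert.IH) auto
  also have "(\<Sum>b\<in>F. b / (b - e) * Q b) = (\<Prod>b\<in>F. b / (b - e))"
    unfolding Q_def using insert.hyps by (intro insert.IH) auto
  finally show ?case
    using insert.hyps insert.prems by (simp add: algebra_simps)
qed

(* The summands are the Lagrange basis polynomials for the nodes B, evaluated at 0. *)
lemma lagrange_basis_sum_at_0:
  fixes B :: "'a::field set"
  assumes "finite B" "B \<noteq> {}"
  shows "(\<Sum>b\<in>B. \<Prod>b'\<in>B - {b}. b' / (b' - b)) = 1"
proof (cases "0 \<in> B")
  case False
  have "(\<Sum>b\<in>B. \<Prod>b'\<in>B - {b}. b' / (b' - b)) = (\<Sum>b\<in>B. b / (b - 0) * (\<Prod>b'\<in>B - {b}. b' / (b' - b)))"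
    using False by (intro sum.cong) auto
  also have "\<dots> = (\<Prod>b\<in>B. b / (b - 0))" using partial_fraction_prod[OF assms False] .
  also have "\<dots> = 1" using False by (intro prod.neutral) auto
  finally show ?thesis .
next
  case True
  have "(\<Prod>b'\<in>B - {b}. b' / (b' - b)) = 0" if "b \<in> B - {0}" for b
    using that True assms(1) by (intro prod_zero) auto
  then have "(\<Sum>b\<in>B - {0}. \<Prod>b'\<in>B - {b}. b' / (b' - b)) = 0" by simp
  moreover have "(\<Prod>b'\<in>B - {0}. b' / (b' - 0)) = 1" by (intro prod.neutral) auto
  ultimately show ?thesis using True assms(1) by (simp add: sum.remove)
qed

section \<open>Rooted forests\<close>

(* P is the set of edges (child, parent), R the set of roots. *)
inductive rooted_forest :: "'a set \<Rightarrow> ('a \<times> 'a) set \<Rightarrow> 'a set \<Rightarrow> bool" where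
  empty: "rooted_forest {} {} {}"
| Un: "rooted_forest V1 P1 R1 \<Longrightarrow> rooted_forest V2 P2 R2 \<Longrightarrow> V1 \<inter> V2 = {} \<Longrightarrow>
    rooted_forest (V1 \<union> V2) (P1 \<union> P2) (R1 \<union> R2)"
| add_root: "rooted_forest V P R \<Longrightarrow> x \<notin> V \<Longrightarrow> rooted_forest (insert x V) (P \<union> R \<times> {x}) {x}"

lemma rooted_forestD:
  "rooted_forest V P R \<Longrightarrow> finite V \<and> finite P \<and> finite R \<and> P \<subseteq> V \<times> V \<and> R \<subseteq> V"
  by (induction rule: rooted_forest.induct) auto

(* The weight of the tree obtained by attaching all roots to a new root labelled c. *)
definition forest_weight :: "'a set \<Rightarrow> ('a \<times> 'a) set \<Rightarrow> 'a set \<Rightarrow> 'b \<Rightarrow> ('a \<Rightarrow> 'b) \<Rightarrow> 'b::field"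
  where "forest_weight V P R c \<phi> = (\<Prod>v\<in>V. \<phi> v) / ((\<Prod>(u,w)\<in>P. \<phi> u - \<phi> w) * (\<Prod>v\<in>R. \<phi> v - c))"

lemma forest_weight_cong:
  assumes "P \<subseteq> V \<times> V" "R \<subseteq> V" "\<And>v. v \<in> V \<Longrightarrow> \<phi> v = \<psi> v"
  shows "forest_weight V P R c \<phi> = forest_weight V P R c \<psi>"
proof -
  have "(\<Prod>(u,w)\<in>P. \<phi> u - \<phi> w) = (\<Prod>(u,w)\<in>P. \<psi> u - \<psi> w)"
    using assms by (intro prod.cong) auto
  moreover have "(\<Prod>v\<in>R. \<phi> v - c) = (\<Prod>v\<in>R. \<psi> v - c)" using assms by (intro prod.cong) auto
  ultimately show ?thesis using assms(3) by (simp add: forest_weight_def)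
qed

lemma forest_weight_Un:
  assumes "rooted_forest V1 P1 R1" "rooted_forest V2 P2 R2" "V1 \<inter> V2 = {}"
  shows "forest_weight (V1 \<union> V2) (P1 \<union> P2) (R1 \<union> R2) c \<phi> =
    forest_weight V1 P1 R1 c (restrict \<phi> V1) * forest_weight V2 P2 R2 c (restrict \<phi> V2)"
proof -
  have 1: "finite V1" "finite P1" "finite R1" "P1 \<subseteq> V1 \<times> V1" "R1 \<subseteq> V1"
    and 2: "finite V2" "finite P2" "finite R2" "P2 \<subseteq> V2 \<times> V2" "R2 \<subseteq> V2"
    using assms(1,2) by (auto dest: rooted_forestD)
  then have "P1 \<inter> P2 = {}" "R1 \<inter> R2 = {}" using assms(3) by auto
  then have "forest_weight (V1 \<union> V2) (P1 \<union> P2) (R1 \<union> R2) c \<phi> =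
      forest_weight V1 P1 R1 c \<phi> * forest_weight V2 P2 R2 c \<phi>"
    using 1 2 assms(3)
    by (simp add: forest_weight_def prod.union_disjoint times_divide_times_eq ac_simps)
  also have "\<dots> = forest_weight V1 P1 R1 c (restrict \<phi> V1) * forest_weight V2 P2 R2 c (restrict \<phi> V2)"
    using 1 2 by (simp cong: forest_weight_cong)
  finally show ?thesis .
qed

lemma prod_edges_add_root:
  fixes \<psi> :: "'a \<Rightarrow> 'b::comm_ring_1"
  assumes "rooted_forest V P R" "x \<notin> V"
  shows "(\<Prod>(u,w)\<in>P \<union> R \<times> {x}. (\<psi>(x := b)) u - (\<psi>(x := b)) w) =
    (\<Prod>(u,w)\<in>P. \<psi> u - \<psi> w) * (\<Prod>v\<in>R. \<psi> v - b)"
proof -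
  have V: "finite P" "finite R" "P \<subseteq> V \<times> V" "R \<subseteq> V" using assms(1) by (auto dest: rooted_forestD)
  have "P \<inter> R \<times> {x} = {}" using V assms(2) by auto
  with V have "(\<Prod>(u,w)\<in>P \<union> R \<times> {x}. (\<psi>(x := b)) u - (\<psi>(x := b)) w) =
      (\<Prod>(u,w)\<in>P. (\<psi>(x := b)) u - (\<psi>(x := b)) w) * (\<Prod>v\<in>R. (\<psi>(x := b)) v - b)"
    by (simp add: prod.union_disjoint prod.cartesian_product[symmetric])
  moreover have "(\<Prod>(u,w)\<in>P. (\<psi>(x := b)) u - (\<psi>(x := b)) w) = (\<Prod>(u,w)\<in>P. \<psi> u - \<psi> w)"
    using V assms(2) by (intro prod.cong) auto
  moreover have "(\<Prod>v\<in>R. (\<psi>(x := b)) v - b) = (\<Prod>v\<in>R. \<psi> v - b)"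
    using V assms(2) by (intro prod.cong) auto
  ultimately show ?thesis by simp
qed

(* For V = V(T) - {r} and F = E(T) this is the summand <T, phi>. *)
definition tree_weight :: "'a set \<Rightarrow> ('a \<times> 'a) set \<Rightarrow> ('a \<Rightarrow> 'b) \<Rightarrow> 'b::field" where
  "tree_weight V F \<phi> = (\<Prod>v\<in>V. \<phi> v) / (\<Prod>(u,w)\<in>F. \<phi> u - \<phi> w)"

lemma tree_weight_add_root:
  assumes "rooted_forest V P R" "x \<notin> V"
  shows "tree_weight V (P \<union> R \<times> {x}) (\<psi>(x := b)) = forest_weight V P R b \<psi>"
proof -
  have "(\<Prod>v\<in>V. (\<psi>(x := b)) v) = (\<Prod>v\<in>V. \<psi> v)" using assms(2) by (auto intro: prod.cong)
  then show ?thesis unfolding tree_weight_def forest_weight_def prod_edges_add_root[OF assms] by simp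
qed

lemma forest_weight_add_root:
  assumes "rooted_forest V P R" "x \<notin> V"
  shows "forest_weight (insert x V) (P \<union> R \<times> {x}) {x} c \<phi> =
    \<phi> x / (\<phi> x - c) * tree_weight V (P \<union> R \<times> {x}) \<phi>"
proof -
  have "finite V" using assms(1) by (auto dest: rooted_forestD)
  then show ?thesis using assms(2)
    by (simp add: forest_weight_def tree_weight_def times_divide_times_eq ac_simps)
qed

lemma sum_forest_weight_Un:
  fixes B :: "'b::field set"
  assumes F1: "rooted_forest V1 P1 R1" and F2: "rooted_forest V2 P2 R2" and disj: "V1 \<inter> V2 = {}"
    and C1: "\<And>(B :: 'b set) c. finite B \<Longrightarrow> card B = card V1 \<Longrightarrow> c \<notin> B \<Longrightarrow>
      (\<Sum>\<phi>\<in>bijections V1 B. forest_weight V1 P1 R1 c \<phi>) = of_nat C1 * (\<Prod>b\<in>B. b / (b - c))"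
    and C2: "\<And>(B :: 'b set) c. finite B \<Longrightarrow> card B = card V2 \<Longrightarrow> c \<notin> B \<Longrightarrow>
      (\<Sum>\<phi>\<in>bijections V2 B. forest_weight V2 P2 R2 c \<phi>) = of_nat C2 * (\<Prod>b\<in>B. b / (b - c))"
    and B: "finite B" "card B = card V1 + card V2" "c \<notin> B"
  shows "(\<Sum>\<phi>\<in>bijections (V1 \<union> V2) B. forest_weight (V1 \<union> V2) (P1 \<union> P2) (R1 \<union> R2) c \<phi>) =
    of_nat (C1 * C2 * (card V1 + card V2 choose card V1)) * (\<Prod>b\<in>B. b / (b - c))"
proof -
  have "finite V1" "finite V2" using F1 F2 by (auto dest: rooted_forestD)
  then have "(\<Sum>\<phi>\<in>bijections (V1 \<union> V2) B. forest_weight (V1 \<union> V2) (P1 \<union> P2) (R1 \<union> R2) c \<phi>) =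
      (\<Sum>B1 | B1 \<subseteq> B \<and> card B1 = card V1. \<Sum>\<phi>1\<in>bijections V1 B1. \<Sum>\<phi>2\<in>bijections V2 (B - B1).
         forest_weight V1 P1 R1 c \<phi>1 * forest_weight V2 P2 R2 c \<phi>2)"
    using B(1) sum_bijections_Un[OF disj _ _ B(1),
        of "\<lambda>\<phi>1 \<phi>2. forest_weight V1 P1 R1 c \<phi>1 * forest_weight V2 P2 R2 c \<phi>2"]
    by (simp add: forest_weight_Un[OF F1 F2 disj])
  also have "\<dots> = (\<Sum>B1 | B1 \<subseteq> B \<and> card B1 = card V1. of_nat (C1 * C2) * (\<Prod>b\<in>B. b / (b - c)))"
  proof (rule sum.cong[OF refl])
    fix B1 assume "B1 \<in> {B1. B1 \<subseteq> B \<and> card B1 = card V1}"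
    then have B1: "B1 \<subseteq> B" "finite B1" "card B1 = card V1"
      using B(1) by (auto intro: finite_subset)
    then have "card (B - B1) = card V2" using B(2) by (simp add: card_Diff_subset)
    have "(\<Sum>\<phi>1\<in>bijections V1 B1. \<Sum>\<phi>2\<in>bijections V2 (B - B1).
           forest_weight V1 P1 R1 c \<phi>1 * forest_weight V2 P2 R2 c \<phi>2)
        = (\<Sum>\<phi>1\<in>bijections V1 B1. forest_weight V1 P1 R1 c \<phi>1) *
          (\<Sum>\<phi>2\<in>bijections V2 (B - B1). forest_weight V2 P2 R2 c \<phi>2)"
      by (simp add: sum_product)
    also have "(\<Sum>\<phi>1\<in>bijections V1 B1. forest_weight V1 P1 R1 c \<phi>1) = of_nat C1 * (\<Prod>b\<in>B1. b / (b - c))"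
      using B(3) B1 by (intro C1) auto
    also have "(\<Sum>\<phi>2\<in>bijections V2 (B - B1). forest_weight V2 P2 R2 c \<phi>2) =
        of_nat C2 * (\<Prod>b\<in>B - B1. b / (b - c))"
      using B \<open>card (B - B1) = card V2\<close> by (intro C2) auto
    also have "of_nat C1 * (\<Prod>b\<in>B1. b / (b - c)) * (of_nat C2 * (\<Prod>b\<in>B - B1. b / (b - c))) =
        of_nat (C1 * C2) * (\<Prod>b\<in>B. b / (b - c))"
      by (simp add: prod.subset_diff[OF B1(1) B(1)] ac_simps)
    finally show "(\<Sum>\<phi>1\<in>bijections V1 B1. \<Sum>\<phi>2\<in>bijections V2 (B - B1).
           forest_weight V1 P1 R1 c \<phi>1 * forest_weight V2 P2 R2 c \<phi>2)
        = of_nat (C1 * C2) * (\<Prod>b\<in>B. b / (b - c))" .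
  qed
  also have "\<dots> = of_nat (card {B1. B1 \<subseteq> B \<and> card B1 = card V1}) * (of_nat (C1 * C2) * (\<Prod>b\<in>B. b / (b - c)))"
    by simp
  also have "card {B1. B1 \<subseteq> B \<and> card B1 = card V1} = card V1 + card V2 choose card V1"
    using B by (simp add: n_subsets)
  finally show ?thesis by (simp add: algebra_simps)
qed

lemma sum_bijections_tree_weight_add_root:
  fixes B :: "'b::field set"
  assumes F: "rooted_forest V P R" "x \<notin> V"
    and C: "\<And>(B :: 'b set) c. finite B \<Longrightarrow> card B = card V \<Longrightarrow> c \<notin> B \<Longrightarrow>
      (\<Sum>\<phi>\<in>bijections V B. forest_weight V P R c \<phi>) = of_nat C * (\<Prod>b\<in>B. b / (b - c))"
    and B: "finite B" "card B = Suc (card V)"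
  shows "(\<Sum>\<phi>\<in>bijections (insert x V) B. g (\<phi> x) * tree_weight V (P \<union> R \<times> {x}) \<phi>) =
    of_nat C * (\<Sum>b\<in>B. g b * (\<Prod>b'\<in>B - {b}. b' / (b' - b)))"
proof -
  have "finite V" using F(1) by (auto dest: rooted_forestD)
  then have "(\<Sum>\<phi>\<in>bijections (insert x V) B. g (\<phi> x) * tree_weight V (P \<union> R \<times> {x}) \<phi>) =
      (\<Sum>b\<in>B. g b * (\<Sum>\<psi>\<in>bijections V (B - {b}). forest_weight V P R b \<psi>))"
    using F B(1) by (simp add: sum_bijections_insert tree_weight_add_root sum_distrib_left)
  also have "\<dots> = (\<Sum>b\<in>B. g b * (of_nat C * (\<Prod>b'\<in>B - {b}. b' / (b' - b))))"
  proof (rule sum.cong[OF refl])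
    fix b assume "b \<in> B"
    then have "(\<Sum>\<psi>\<in>bijections V (B - {b}). forest_weight V P R b \<psi>) =
        of_nat C * (\<Prod>b'\<in>B - {b}. b' / (b' - b))"
      using B by (intro C) auto
    then show "g b * (\<Sum>\<psi>\<in>bijections V (B - {b}). forest_weight V P R b \<psi>) =
        g b * (of_nat C * (\<Prod>b'\<in>B - {b}. b' / (b' - b)))" by simp
  qed
  finally show ?thesis by (simp add: sum_distrib_left ac_simps)
qed

lemma sum_forest_weight_add_root:
  fixes B :: "'b::field set"
  assumes F: "rooted_forest V P R" "x \<notin> V"
    and C: "\<And>(B :: 'b set) c. finite B \<Longrightarrow> card B = card V \<Longrightarrow> c \<notin> B \<Longrightarrow>
      (\<Sum>\<phi>\<in>bijections V B. forest_weight V P R c \<phi>) = of_nat C * (\<Prod>b\<in>B. b / (b - c))"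
    and B: "finite B" "card B = Suc (card V)" "c \<notin> B"
  shows "(\<Sum>\<phi>\<in>bijections (insert x V) B. forest_weight (insert x V) (P \<union> R \<times> {x}) {x} c \<phi>) =
    of_nat C * (\<Prod>b\<in>B. b / (b - c))"
proof -
  have "(\<Sum>\<phi>\<in>bijections (insert x V) B. forest_weight (insert x V) (P \<union> R \<times> {x}) {x} c \<phi>) =
      (\<Sum>\<phi>\<in>bijections (insert x V) B. \<phi> x / (\<phi> x - c) * tree_weight V (P \<union> R \<times> {x}) \<phi>)"
    by (simp add: forest_weight_add_root[OF F])
  also have "\<dots> = of_nat C * (\<Sum>b\<in>B. b / (b - c) * (\<Prod>b'\<in>B - {b}. b' / (b' - b)))"
    by (rule sum_bijections_tree_weight_add_root[OF F C B(1,2)])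
  also have "(\<Sum>b\<in>B. b / (b - c) * (\<Prod>b'\<in>B - {b}. b' / (b' - b))) = (\<Prod>b\<in>B. b / (b - c))"
    using B by (intro partial_fraction_prod) auto
  finally show ?thesis .
qed

lemma sum_forest_weight:
  assumes "rooted_forest V P R"
  shows "\<exists>C>0. \<forall>(B :: 'b::field set) c. finite B \<longrightarrow> card B = card V \<longrightarrow> c \<notin> B \<longrightarrow>
    (\<Sum>\<phi>\<in>bijections V B. forest_weight V P R c \<phi>) = of_nat C * (\<Prod>b\<in>B. b / (b - c))"
  using assms
proof (induction rule: rooted_forest.induct)
  case empty
  have "bijections ({} :: 'a set) ({} :: 'b set) = {\<lambda>_. undefined}" by (auto simp: bijections_def bij_betw_def)
  then show ?case by (auto intro!: exI[of _ 1] simp: forest_weight_def)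
next
  case (Un V1 P1 R1 V2 P2 R2)
  then obtain C1 C2 where "C1 > 0" "C2 > 0"
    and C1: "\<And>(B :: 'b set) c. finite B \<Longrightarrow> card B = card V1 \<Longrightarrow> c \<notin> B \<Longrightarrow>
      (\<Sum>\<phi>\<in>bijections V1 B. forest_weight V1 P1 R1 c \<phi>) = of_nat C1 * (\<Prod>b\<in>B. b / (b - c))"
    and C2: "\<And>(B :: 'b set) c. finite B \<Longrightarrow> card B = card V2 \<Longrightarrow> c \<notin> B \<Longrightarrow>
      (\<Sum>\<phi>\<in>bijections V2 B. forest_weight V2 P2 R2 c \<phi>) = of_nat C2 * (\<Prod>b\<in>B. b / (b - c))"
    by blast
  have card: "card (V1 \<union> V2) = card V1 + card V2"
    using Un.hyps by (auto dest: rooted_forestD intro: card_Un_disjoint)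
  show ?case
  proof (intro exI conjI allI impI)
    show "C1 * C2 * (card V1 + card V2 choose card V1) > 0" using \<open>C1 > 0\<close> \<open>C2 > 0\<close> by simp
    fix B :: "'b set" and c assume "finite B" "card B = card (V1 \<union> V2)" "c \<notin> B"
    then show "(\<Sum>\<phi>\<in>bijections (V1 \<union> V2) B. forest_weight (V1 \<union> V2) (P1 \<union> P2) (R1 \<union> R2) c \<phi>) =
        of_nat (C1 * C2 * (card V1 + card V2 choose card V1)) * (\<Prod>b\<in>B. b / (b - c))"
      using card by (intro sum_forest_weight_Un[OF Un.hyps C1 C2]) auto
  qed
next
  case (add_root V P R x)
  then obtain C where "C > 0"
    and C: "\<And>(B :: 'b set) c. finite B \<Longrightarrow> card B = card V \<Longrightarrow> c \<notin> B \<Longrightarrow>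
      (\<Sum>\<phi>\<in>bijections V B. forest_weight V P R c \<phi>) = of_nat C * (\<Prod>b\<in>B. b / (b - c))"
    by blast
  have card: "card (insert x V) = Suc (card V)"
    using add_root.hyps by (auto dest: rooted_forestD)
  show ?case
  proof (intro exI conjI allI impI)
    show "C > 0" by fact
    fix B :: "'b set" and c assume "finite B" "card B = card (insert x V)" "c \<notin> B"
    then show "(\<Sum>\<phi>\<in>bijections (insert x V) B. forest_weight (insert x V) (P \<union> R \<times> {x}) {x} c \<phi>) =
        of_nat C * (\<Prod>b\<in>B. b / (b - c))"
      using card by (intro sum_forest_weight_add_root[OF add_root.hyps C]) auto
  qed
qed

section \<open>Orienting a rooted tree towards its root\<close>

lemma rooted_forest_singleton: "rooted_forest {x} {} {x}"
  using rooted_forest.add_root[OF rooted_forest.empty, of x] by simp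

lemma rooted_forest_attach_leaf:
  "rooted_forest V P R \<Longrightarrow> p \<in> V \<Longrightarrow> l \<notin> V \<Longrightarrow> rooted_forest (insert l V) (insert (l, p) P) R"
proof (induction rule: rooted_forest.induct)
  case empty
  then show ?case by simp
next
  case (Un V1 P1 R1 V2 P2 R2)
  show ?case
  proof (cases "p \<in> V1")
    case True
    then have "rooted_forest (insert l V1 \<union> V2) (insert (l, p) P1 \<union> P2) (R1 \<union> R2)"
      using Un by (intro rooted_forest.Un) auto
    then show ?thesis by simp
  next
    case False
    then have "rooted_forest (V1 \<union> insert l V2) (P1 \<union> insert (l, p) P2) (R1 \<union> R2)"
      using Un by (intro rooted_forest.Un) auto
    then show ?thesis by simp
  qed
next
  case (add_root V P R x)
  show ?case
  proof (cases "p = x")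
    case True
    have "rooted_forest (V \<union> {l}) (P \<union> {}) (R \<union> {l})"
      using add_root by (intro rooted_forest.Un rooted_forest_singleton) auto
    then have "rooted_forest (insert x (V \<union> {l})) (P \<union> (R \<union> {l}) \<times> {x}) {x}"
      using add_root by (intro rooted_forest.add_root) auto
    moreover have "P \<union> (R \<union> {l}) \<times> {x} = insert (l, p) (P \<union> R \<times> {x})" using True by auto
    ultimately show ?thesis by (simp add: insert_commute)
  next
    case False
    then have "rooted_forest (insert x (insert l V)) (insert (l, p) P \<union> R \<times> {x}) {x}"
      using add_root by (intro rooted_forest.add_root) auto
    then show ?thesis by (simp add: insert_commute)
  qed
qed

lemma rooted_forest_add_leaf:
  assumes "rooted_forest W P R" "l \<notin> W" "r \<notin> W" "l \<noteq> r" "p \<in> insert r W"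
  obtains P' R' where "rooted_forest (insert l W) P' R'" "P' \<union> R' \<times> {r} = insert (l, p) (P \<union> R \<times> {r})"
proof (cases "p = r")
  case True
  have "rooted_forest (W \<union> {l}) (P \<union> {}) (R \<union> {l})"
    using assms by (intro rooted_forest.Un rooted_forest_singleton) auto
  moreover have "P \<union> (R \<union> {l}) \<times> {r} = insert (l, p) (P \<union> R \<times> {r})" using True by auto
  ultimately show ?thesis using that by simp
next
  case False
  then have "rooted_forest (insert l W) (insert (l, p) P) R"
    using assms by (intro rooted_forest_attach_leaf) auto
  then show ?thesis using that by simp
qed

definition incident_edges :: "('a \<times> 'a) set \<Rightarrow> 'a \<Rightarrow> ('a \<times> 'a) set" where
  "incident_edges E v = {e \<in> E. fst e = v \<or> snd e = v}"

lemma sum_card_incident_edges: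
  assumes "finite V" "E \<subseteq> V \<times> V" "\<forall>(a, b)\<in>E. a \<noteq> b"
  shows "(\<Sum>v\<in>V. card (incident_edges E v)) = 2 * card E"
proof -
  have E: "finite E" using assms(1,2) by (meson finite_SigmaI finite_subset)
  have split: "card (incident_edges E v) = card {e \<in> E. fst e = v} + card {e \<in> E. snd e = v}" for v
  proof -
    have "incident_edges E v = {e \<in> E. fst e = v} \<union> {e \<in> E. snd e = v}"
      by (auto simp: incident_edges_def)
    moreover have "{e \<in> E. fst e = v} \<inter> {e \<in> E. snd e = v} = {}" using assms(3) by auto
    ultimately show ?thesis using E by (simp add: card_Un_disjoint)
  qed
  have "fst ` E \<subseteq> V" "snd ` E \<subseteq> V" using assms(2) by auto
  then have "(\<Sum>v\<in>V. card {e \<in> E. fst e = v}) = card E" "(\<Sum>v\<in>V. card {e \<in> E. snd e = v}) = card E"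
    using sum.group[OF E assms(1), of _ "\<lambda>_. 1 :: nat"] by auto
  then show ?thesis by (simp add: split sum.distrib)
qed

lemma incident_edges_nonempty:
  assumes "(v, w) \<in> (E \<union> E\<inverse>)\<^sup>*" "v \<noteq> w"
  shows "incident_edges E v \<noteq> {}"
proof -
  obtain y where "(v, y) \<in> E \<union> E\<inverse>" using assms by (cases rule: converse_rtranclE) auto
  then show ?thesis by (auto simp: incident_edges_def)
qed

lemma rooted_directed_tree_leaf:
  assumes "rooted_directed_tree V E r" "card V \<ge> 2"
  obtains l e where "l \<in> V" "l \<noteq> r" "incident_edges E l = {e}"
proof -
  have V: "finite V" "r \<in> V" "E \<subseteq> V \<times> V" "\<forall>(a, b)\<in>E. a \<noteq> b" "card E = card V - 1"
    and conn: "\<forall>u\<in>V. \<forall>w\<in>V. (u, w) \<in> (E \<union> E\<inverse>)\<^sup>*"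
    using assms(1) by (auto simp: rooted_directed_tree_def)
  let ?deg = "\<lambda>v. card (incident_edges E v)"
  have "finite (incident_edges E v)" for v
    using V(1,3) by (auto simp: incident_edges_def intro: finite_subset[OF _ finite_cartesian_product])
  moreover have "incident_edges E v \<noteq> {}" if "v \<in> V" for v
  proof -
    have "\<not> V \<subseteq> {v}" using \<open>card V \<ge> 2\<close> card_mono[of "{v}" V] by auto
    then obtain w where "w \<in> V" "w \<noteq> v" by blast
    then show ?thesis using conn that by (intro incident_edges_nonempty[of v w]) auto
  qed
  ultimately have pos: "?deg v \<ge> 1" if "v \<in> V" for v
    using that by (simp add: Suc_le_eq card_gt_0_iff)
  have "\<exists>l\<in>V - {r}. ?deg l < 2"
  proof (rule ccontr)
    assume "\<not> ?thesis"
    then have "(\<Sum>v\<in>V - {r}. 2) \<le> (\<Sum>v\<in>V - {r}. ?deg v)" by (intro sum_mono) (auto simp: not_less)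
    then have "1 + 2 * (card V - 1) \<le> ?deg r + (\<Sum>v\<in>V - {r}. ?deg v)"
      using pos[OF V(2)] V(1,2) by simp
    also have "\<dots> = (\<Sum>v\<in>V. ?deg v)" using V(1,2) by (simp add: sum.remove)
    also have "\<dots> = 2 * card E" using V(1,3,4) by (rule sum_card_incident_edges)
    finally show False using V(5) by simp
  qed
  then obtain l where "l \<in> V" "l \<noteq> r" "?deg l = 1" using pos by fastforce
  then show ?thesis using that by (auto simp: card_1_singleton_iff)
qed

lemma rtrancl_remove_leaf:
  assumes "(u, w) \<in> (E \<union> E\<inverse>)\<^sup>*" "u \<noteq> l" "w \<noteq> l" "incident_edges E l \<subseteq> {(l, p), (p, l)}"
  shows "(u, w) \<in> ((E - incident_edges E l) \<union> (E - incident_edges E l)\<inverse>)\<^sup>*"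
proof -
  let ?F = "E - incident_edges E l"
  have "(w \<noteq> l \<longrightarrow> (u, w) \<in> (?F \<union> ?F\<inverse>)\<^sup>*) \<and> (w = l \<longrightarrow> (u, p) \<in> (?F \<union> ?F\<inverse>)\<^sup>*)"
    using assms(1)
  proof (induction rule: rtrancl_induct)
    case base
    then show ?case using assms(2) by simp
  next
    case (step y z)
    consider "y \<noteq> l" "z \<noteq> l" | "y = l" | "z = l" "y \<noteq> l" by blast
    then show ?case
    proof cases
      case 1
      then have "(y, z) \<in> ?F \<union> ?F\<inverse>" using step.hyps(2) by (auto simp: incident_edges_def)
      then show ?thesis using 1 step.IH by (auto intro: rtrancl_into_rtrancl)
    next
      case 2
      then have "z = l \<or> z = p" using step.hyps(2) assms(4) by (auto simp: incident_edges_def)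
      then show ?thesis using 2 step.IH by auto
    next
      case 3
      then have "y = p" using step.hyps(2) assms(4) by (auto simp: incident_edges_def)
      then show ?thesis using 3 step.IH by auto
    qed
  qed
  then show ?thesis using assms(3) by simp
qed

lemma incident_edges_singletonE:
  assumes "incident_edges E l = {e}"
  obtains p where "e \<in> E" "e = (l, p) \<or> e = (p, l)"
proof -
  have "e \<in> E" "fst e = l \<or> snd e = l" using assms by (auto simp: incident_edges_def)
  then show ?thesis using that by (metis prod.collapse)
qed

lemma rooted_directed_tree_remove_leaf:
  assumes T: "rooted_directed_tree V E r" and l: "l \<in> V" "l \<noteq> r" and e: "incident_edges E l = {e}"
  shows "rooted_directed_tree (V - {l}) (E - {e}) r"
proof -
  have V: "finite V" "r \<in> V" "E \<subseteq> V \<times> V" "\<forall>(a, b)\<in>E. a \<noteq> b" "card E = card V - 1"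
    and conn: "\<forall>u\<in>V. \<forall>w\<in>V. (u, w) \<in> (E \<union> E\<inverse>)\<^sup>*"
    using T by (auto simp: rooted_directed_tree_def)
  obtain p where "e \<in> E" "e = (l, p) \<or> e = (p, l)" using e by (rule incident_edges_singletonE)
  then have "incident_edges E l \<subseteq> {(l, p), (p, l)}" using e by auto
  then have "\<forall>u\<in>V - {l}. \<forall>w\<in>V - {l}. (u, w) \<in> ((E - {e}) \<union> (E - {e})\<inverse>)\<^sup>*"
    using conn rtrancl_remove_leaf[where E = E and l = l] by (auto simp: e)
  moreover have "E - incident_edges E l \<subseteq> (V - {l}) \<times> (V - {l})"
    using V(3) by (auto simp: incident_edges_def)
  moreover have "card (E - {e}) = card (V - {l}) - 1"
    using V l \<open>e \<in> E\<close> by (simp add: finite_subset[OF V(3)])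
  ultimately show ?thesis using V l by (auto simp: rooted_directed_tree_def e)
qed

lemma prod_edges_remove:
  fixes \<phi> :: "'a \<Rightarrow> 'b::comm_ring_1"
  assumes "finite E" "e \<in> E" "e = (l, p) \<or> e = (p, l)"
  shows "(\<Prod>(a, b)\<in>E. \<phi> a - \<phi> b) =
    of_int (if e = (l, p) then 1 else -1) * (\<phi> l - \<phi> p) * (\<Prod>(a, b)\<in>E - {e}. \<phi> a - \<phi> b)"
  using assms by (auto simp: prod.remove)

lemma rooted_directed_tree_prod_edges:
  assumes "rooted_directed_tree V E r"
  shows "\<exists>P R (s :: int). rooted_forest (V - {r}) P R \<and> (s = 1 \<or> s = -1) \<and>
    (\<forall>\<phi> :: 'a \<Rightarrow> 'b :: comm_ring_1.
      (\<Prod>(a, b)\<in>E. \<phi> a - \<phi> b) = of_int s * (\<Prod>(u, w)\<in>P \<union> R \<times> {r}. \<phi> u - \<phi> w))"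
  using assms
proof (induction "card V" arbitrary: V E)
  case 0
  then show ?case by (simp add: rooted_directed_tree_def)
next
  case (Suc n)
  have V: "finite V" "r \<in> V" "E \<subseteq> V \<times> V" "\<forall>(a, b)\<in>E. a \<noteq> b"
    using Suc.prems by (auto simp: rooted_directed_tree_def)
  show ?case
  proof (cases "n = 0")
    case True
    then have "V = {r}" using Suc.hyps(2) V by (metis One_nat_def card_1_singletonE singletonD)
    then have "E = {}" using V by auto
    then show ?thesis using \<open>V = {r}\<close>
      by (auto intro!: exI[of _ "{} :: ('a \<times> 'a) set"] exI[of _ "{} :: 'a set"] exI[of _ 1] rooted_forest.empty)
  next
    case False
    then obtain l e where l: "l \<in> V" "l \<noteq> r" and e: "incident_edges E l = {e}"
      using rooted_directed_tree_leaf[OF Suc.prems] Suc.hyps(2) by auto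
    obtain p where "e \<in> E" and p: "e = (l, p) \<or> e = (p, l)"
      using e by (rule incident_edges_singletonE)
    then have "p \<in> V - {l}" using V(3,4) by auto
    have "rooted_directed_tree (V - {l}) (E - {e}) r"
      using Suc.prems l e by (rule rooted_directed_tree_remove_leaf)
    moreover have "n = card (V - {l})" using Suc.hyps(2) V(1) l by simp
    ultimately obtain P R and s :: int where PR: "rooted_forest (V - {l} - {r}) P R" "s = 1 \<or> s = -1"
      and s: "\<And>\<phi> :: 'a \<Rightarrow> 'b. (\<Prod>(a, b)\<in>E - {e}. \<phi> a - \<phi> b) =
        of_int s * (\<Prod>(u, w)\<in>P \<union> R \<times> {r}. \<phi> u - \<phi> w)"
      using Suc.hyps(1) by blast
    obtain P' R' where "rooted_forest (insert l (V - {l} - {r})) P' R'"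
      and P'R': "P' \<union> R' \<times> {r} = insert (l, p) (P \<union> R \<times> {r})"
      using rooted_forest_add_leaf[OF PR(1), of l r p] l \<open>p \<in> V - {l}\<close> by blast
    moreover have "insert l (V - {l} - {r}) = V - {r}" using l by auto
    ultimately have "rooted_forest (V - {r}) P' R'" by simp
    define t :: int where "t = (if e = (l, p) then 1 else -1)"
    have "finite E" "(l, p) \<notin> P \<union> R \<times> {r}" "finite (P \<union> R \<times> {r})"
      using V(1,3) rooted_forestD[OF PR(1)] by (auto simp: finite_subset)
    then have "(\<Prod>(a, b)\<in>E. \<phi> a - \<phi> b) = of_int (t * s) * (\<Prod>(u, w)\<in>P' \<union> R' \<times> {r}. \<phi> u - \<phi> w)"
      for \<phi> :: "'a \<Rightarrow> 'b"
      by (simp add: prod_edges_remove[OF _ \<open>e \<in> E\<close> p] s P'R' t_def ac_simps)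
    moreover have "t * s = 1 \<or> t * s = -1" using PR(2) by (auto simp: t_def)
    ultimately show ?thesis using \<open>rooted_forest (V - {r}) P' R'\<close> by blast
  qed
qed

section \<open>The bracket of a rooted tree\<close>

lemma tree_weight_cong:
  assumes "W \<subseteq> V" "F \<subseteq> V \<times> V" "\<And>v. v \<in> V \<Longrightarrow> \<phi> v = \<psi> v"
  shows "tree_weight W F \<phi> = tree_weight W F \<psi>"
proof -
  have "(\<Prod>v\<in>W. \<phi> v) = (\<Prod>v\<in>W. \<psi> v)" using assms by (intro prod.cong) auto
  moreover have "(\<Prod>(u,w)\<in>F. \<phi> u - \<phi> w) = (\<Prod>(u,w)\<in>F. \<psi> u - \<psi> w)"
    using assms by (intro prod.cong) auto
  ultimately show ?thesis by (simp add: tree_weight_def)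
qed

lemma tree_bracket_at_eq_sum_bijections:
  assumes "E \<subseteq> V \<times> V" "inj_on x {1..card V}"
  shows "tree_bracket_at V E r x = (\<Sum>\<phi>\<in>bijections V (x ` {1..card V}). tree_weight (V - {r}) E \<phi>)"
proof -
  have "tree_bracket_at V E r x = (\<Sum>\<sigma>\<in>bijections V {1..card V}. tree_weight (V - {r}) E (x \<circ> \<sigma>))"
    by (simp add: tree_bracket_at_def labelings_def bijections_def tree_weight_def)
  also have "\<dots> = (\<Sum>\<sigma>\<in>bijections V {1..card V}. tree_weight (V - {r}) E (restrict (x \<circ> \<sigma>) V))"
    using assms(1) by (intro sum.cong refl tree_weight_cong[of _ V]) auto
  also have "\<dots> = (\<Sum>\<phi>\<in>bijections V (x ` {1..card V}). tree_weight (V - {r}) E \<phi>)"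
    by (rule sum.reindex_bij_betw[OF bij_betw_bijections_image[OF assms(2)]])
  finally show ?thesis .
qed

lemma sum_bijections_tree_weight:
  assumes "rooted_directed_tree V E r"
  shows "\<exists>c :: int. c \<noteq> 0 \<and> (\<forall>B :: 'b :: field set. finite B \<longrightarrow> card B = card V \<longrightarrow>
    (\<Sum>\<phi>\<in>bijections V B. tree_weight (V - {r}) E \<phi>) = of_int c)"
proof -
  have r: "r \<in> V" "finite V" using assms by (auto simp: rooted_directed_tree_def)
  have card_V: "card V = Suc (card (V - {r}))" using card_Suc_Diff1[OF r(2,1)] by simp
  obtain P R and s :: int where F: "rooted_forest (V - {r}) P R" and s: "s = 1 \<or> s = -1"
    and E: "\<And>\<phi> :: 'a \<Rightarrow> 'b. (\<Prod>(a, b)\<in>E. \<phi> a - \<phi> b) = of_int s * (\<Prod>(u, w)\<in>P \<union> R \<times> {r}. \<phi> u - \<phi> w)"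
    using rooted_directed_tree_prod_edges[OF assms] by blast
  obtain C where "C > 0" and C: "\<And>(B :: 'b set) c. finite B \<Longrightarrow> card B = card (V - {r}) \<Longrightarrow> c \<notin> B \<Longrightarrow>
      (\<Sum>\<phi>\<in>bijections (V - {r}) B. forest_weight (V - {r}) P R c \<phi>) = of_nat C * (\<Prod>b\<in>B. b / (b - c))"
    using sum_forest_weight[OF F] by blast
  have "(\<Sum>\<phi>\<in>bijections V B. tree_weight (V - {r}) E \<phi>) = of_int (s * int C)"
    if B: "finite B" "card B = card V" for B :: "'b set"
  proof -
    have "tree_weight (V - {r}) E \<phi> = of_int s * tree_weight (V - {r}) (P \<union> R \<times> {r}) \<phi>"
      for \<phi> :: "'a \<Rightarrow> 'b"
      using s by (auto simp: tree_weight_def E)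
    then have "(\<Sum>\<phi>\<in>bijections V B. tree_weight (V - {r}) E \<phi>) =
        of_int s * (\<Sum>\<phi>\<in>bijections (insert r (V - {r})) B. 1 * tree_weight (V - {r}) (P \<union> R \<times> {r}) \<phi>)"
      using r by (simp add: insert_absorb sum_distrib_left)
    also have "\<dots> = of_int s * (of_nat C * (\<Sum>b\<in>B. 1 * (\<Prod>b'\<in>B - {b}. b' / (b' - b))))"
      using B card_V by (subst sum_bijections_tree_weight_add_root[OF F _ C]) simp_all
    also have "(\<Sum>b\<in>B. 1 * (\<Prod>b'\<in>B - {b}. b' / (b' - b))) = 1"
    proof -
      have "B \<noteq> {}" using B card_V by auto
      then show ?thesis using B(1) by (simp add: lagrange_basis_sum_at_0)
    qed
    finally show ?thesis by simp
  qed
  moreover have "s * int C \<noteq> 0" using s \<open>C > 0\<close> by auto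
  ultimately show ?thesis by blast
qed

theorem mainTheorem7:
  fixes V :: "'a set" and E :: "('a \<times> 'a) set" and r :: 'a
  assumes "rooted_directed_tree V E r"
    and "card V \<ge> 1"
  shows "\<exists>c::int. c \<noteq> 0 \<and>
           (\<forall>x :: nat \<Rightarrow> rat. inj_on x {1..card V} \<longrightarrow> tree_bracket_at V E r x = of_int c)"
proof -
  obtain c :: int where "c \<noteq> 0" and c: "\<And>B :: rat set. finite B \<Longrightarrow> card B = card V \<Longrightarrow>
      (\<Sum>\<phi>\<in>bijections V B. tree_weight (V - {r}) E \<phi>) = of_int c"
    using sum_bijections_tree_weight[OF assms(1)] by blast
  have "tree_bracket_at V E r x = of_int c" if "inj_on x {1..card V}" for x :: "nat \<Rightarrow> rat"
  proof -
    have "E \<subseteq> V \<times> V" using assms(1) by (simp add: rooted_directed_tree_def)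
    then show ?thesis
      using that by (simp add: tree_bracket_at_eq_sum_bijections c card_image)
  qed
  with \<open>c \<noteq> 0\<close> show ?thesis by blast
qed

end
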